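(* Let $r\geq 3$ and let $D$ be an $m$-colored semicomplete $r$-partite digraph such that every directed $3$-cycle $\overrightarrow{C}_3$ and every directed $4$-cycle $\overrightarrow{C}_4$ contained in $D$ (as a subdigraph) is monochromatic. Let $x,y$ be distinct vertices of $D$. If there exists a directed path from $x$ to $y$ using exactly $2$ colors and there is no directed path from $y$ to $x$ using at most $2$ colors, then $d(x,y)\leq 2$.
   Context: A semicomplete $r$-partite digraph ($r\ge 2$) is a digraph whose vertex set is partitioned into $r$ nonempty independent sets (partite sets) such that for any two vertices $u,v$ in different partite sets at least one of the arcs $(u,v)$, $(v,u)$ is present (both may be present); there are no arcs inside a partite set. An $m$-colored digraph is a digraph whose arcs are each assigned one of $m$ colors. A directed path (no repeated vertices) is $j$-colored if its arcs use exactly $j$ distinct colors; it uses at most $k$ colors if it is $j$-colored for some $1\le j\le k$. A subdigraph is monochromatic if all its arcs have the same color. $\overrightarrow{C}_n$ is the directed cycle of length $n$. $d(x,y)$ denotes the minimum number of arcs of a directed path from $x$ to $y$. *)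

theory Defs
  imports Main "HOL-Library.Disjoint_Sets"
begin

definition semicomplete_multipartite :: "'a set \<Rightarrow> ('a \<times> 'a) set \<Rightarrow> 'a set set \<Rightarrow> bool" where
  "semicomplete_multipartite V A P \<longleftrightarrow>
     finite V \<and> A \<subseteq> V \<times> V \<and> partition_on V P \<and>
     (\<forall>X\<in>P. \<forall>u\<in>X. \<forall>v\<in>X. (u, v) \<notin> A) \<and>
     (\<forall>u\<in>V. \<forall>v\<in>V. (\<not> (\<exists>X\<in>P. u \<in> X \<and> v \<in> X)) \<longrightarrow> (u, v) \<in> A \<or> (v, u) \<in> A)"

definition path_arcs :: "'a list \<Rightarrow> ('a \<times> 'a) list" where
  "path_arcs p = zip p (tl p)"

definition dpath :: "('a \<times> 'a) set \<Rightarrow> 'a list \<Rightarrow> 'a \<Rightarrow> 'a \<Rightarrow> bool" where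
  "dpath A p x y \<longleftrightarrow> p \<noteq> [] \<and> hd p = x \<and> last p = y \<and> distinct p \<and>
     set (path_arcs p) \<subseteq> A"

definition path_colors :: "('a \<times> 'a \<Rightarrow> 'c) \<Rightarrow> 'a list \<Rightarrow> 'c set" where
  "path_colors col p = col ` set (path_arcs p)"

definition dcycle :: "('a \<times> 'a) set \<Rightarrow> nat \<Rightarrow> 'a list \<Rightarrow> bool" where
  "dcycle A n c \<longleftrightarrow> length c = n \<and> distinct c \<and>
     (\<forall>i<n. (c ! i, c ! (Suc i mod n)) \<in> A)"

definition mono_cycle :: "('a \<times> 'a \<Rightarrow> 'c) \<Rightarrow> 'a list \<Rightarrow> bool" where
  "mono_cycle col c \<longleftrightarrow> (\<forall>i<length c. \<forall>j<length c.
     col (c ! i, c ! (Suc i mod length c)) = col (c ! j, c ! (Suc j mod length c)))"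

end

theory Submission
  imports Defs
begin

(* Suppose, for contradiction, that every x-y path has at least three arcs.
   Then x and y are non-adjacent, so they lie in a common partite set X, and no vertex z
   gives x -> z -> y (too short) or y -> z -> x (at most two colours).  Hence every vertex
   outside X is a common out-neighbour of x and y or a common in-neighbour of them.
   Walking along the given x-y path, the first vertex after x is a common out-neighbour and
   the last one before y a common in-neighbour; at the first common in-neighbour w the walk
   arrives either directly from a common out-neighbour u, or from u through a vertex v of X. *)

lemma mono_cycle3_colors:
  assumes "mono_cycle col [a, b, c]"
  shows "col (a, b) = col (b, c)" and "col (c, a) = col (b, c)"
proof -
  have eq: "\<And>i j. i < 3 \<Longrightarrow> j < 3 \<Longrightarrow>
      col ([a,b,c] ! i, [a,b,c] ! (Suc i mod 3)) = col ([a,b,c] ! j, [a,b,c] ! (Suc j mod 3))"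
    using assms unfolding mono_cycle_def by simp
  show "col (a, b) = col (b, c)" using eq[of 0 1] by simp
  show "col (c, a) = col (b, c)" using eq[of 2 1] by simp
qed

lemma mono_cycle4_colors:
  assumes "mono_cycle col [a, b, c, d]"
  shows "col (a, b) = col (b, c)" and "col (c, d) = col (b, c)" and "col (d, a) = col (b, c)"
proof -
  have eq: "\<And>i j. i < 4 \<Longrightarrow> j < 4 \<Longrightarrow>
      col ([a,b,c,d] ! i, [a,b,c,d] ! (Suc i mod 4)) = col ([a,b,c,d] ! j, [a,b,c,d] ! (Suc j mod 4))"
    using assms unfolding mono_cycle_def by simp
  show "col (a, b) = col (b, c)" using eq[of 0 1] by simp
  show "col (c, d) = col (b, c)" using eq[of 2 1] by simp
  show "col (d, a) = col (b, c)" using eq[of 3 1] by simp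
qed

lemma dcycle3I:
  assumes "distinct [a, b, c]" "(a, b) \<in> A" "(b, c) \<in> A" "(c, a) \<in> A"
  shows "dcycle A 3 [a, b, c]"
  unfolding dcycle_def
proof (intro conjI allI impI)
  fix i :: nat assume "i < 3"
  then have "i = 0 \<or> i = 1 \<or> i = 2" by arith
  then show "([a,b,c] ! i, [a,b,c] ! (Suc i mod 3)) \<in> A" using assms by auto
qed (use assms in auto)

lemma dcycle4I:
  assumes "distinct [a, b, c, d]" "(a, b) \<in> A" "(b, c) \<in> A" "(c, d) \<in> A" "(d, a) \<in> A"
  shows "dcycle A 4 [a, b, c, d]"
  unfolding dcycle_def
proof (intro conjI allI impI)
  fix i :: nat assume "i < 4"
  then have "i = 0 \<or> i = 1 \<or> i = 2 \<or> i = 3" by arith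
  then show "([a,b,c,d] ! i, [a,b,c,d] ! (Suc i mod 4)) \<in> A" using assms by auto
qed (use assms in auto)

lemma dpath_arc:
  assumes "dpath A p x y" "Suc i < length p"
  shows "(p ! i, p ! Suc i) \<in> A"
proof -
  have "(p ! i, tl p ! i) \<in> set (zip p (tl p))" using assms(2) by (auto simp: set_zip)
  then show ?thesis using assms nth_tl[of i p] unfolding dpath_def path_arcs_def by auto
qed

locale counterexample =
  fixes V :: "'a set" and A :: "('a \<times> 'a) set" and P :: "'a set set"
    and col :: "'a \<times> 'a \<Rightarrow> 'c" and x y :: 'a
  assumes D: "semicomplete_multipartite V A P"
    and C3: "\<And>c. dcycle A 3 c \<Longrightarrow> mono_cycle col c"
    and C4: "\<And>c. dcycle A 4 c \<Longrightarrow> mono_cycle col c"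
    and xV: "x \<in> V" and yV: "y \<in> V" and xy: "x \<noteq> y"
    and no_short: "\<not> (\<exists>p. dpath A p x y \<and> length p \<le> 3)"
    and no_back: "\<not> (\<exists>q. dpath A q y x \<and> card (path_colors col q) \<le> 2)"
begin

lemma arcs_in_V: "(u, v) \<in> A \<Longrightarrow> u \<in> V \<and> v \<in> V"
  using D unfolding semicomplete_multipartite_def by blast

lemma no_monochromatic_back_path:
  assumes "dpath A q y x" "path_colors col q \<subseteq> {c}"
  shows False
proof -
  have "card (path_colors col q) \<le> card {c}" using assms(2) by (rule card_mono[rotated]) simp
  then show False using no_back assms(1) by auto
qed

lemma not_adjacent: "(x, y) \<notin> A" "(y, x) \<notin> A"
proof -
  show "(x, y) \<notin> A"
  proof
    assume "(x, y) \<in> A"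
    then have "dpath A [x, y] x y" using xy by (simp add: dpath_def path_arcs_def)
    then show False using no_short by fastforce
  qed
  show "(y, x) \<notin> A"
  proof
    assume "(y, x) \<in> A"
    then have "dpath A [y, x] y x" using xy by (simp add: dpath_def path_arcs_def)
    then show False by (rule no_monochromatic_back_path) (simp add: path_colors_def path_arcs_def)
  qed
qed

lemma common_part: "\<exists>X\<in>P. x \<in> X \<and> y \<in> X"
  using D xV yV not_adjacent unfolding semicomplete_multipartite_def by blast

end

locale counterexample_part = counterexample +
  fixes X :: "'a set"
  assumes X: "X \<in> P" "x \<in> X" "y \<in> X"
begin

lemma no_arc_in_X: "u \<in> X \<Longrightarrow> v \<in> X \<Longrightarrow> (u, v) \<notin> A"
  using D X(1) unfolding semicomplete_multipartite_def by blast

lemma adjacent_outside_X: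
  assumes "w \<in> V" "w \<notin> X" "v \<in> X"
  shows "(v, w) \<in> A \<or> (w, v) \<in> A"
proof -
  have "v \<in> V" using D X(1) assms(3) unfolding semicomplete_multipartite_def partition_on_def by blast
  moreover have "\<not> (\<exists>X'\<in>P. v \<in> X' \<and> w \<in> X')"
    using D X assms unfolding semicomplete_multipartite_def partition_on_def disjoint_def by blast
  ultimately show ?thesis using D assms(1) unfolding semicomplete_multipartite_def by blast
qed

lemma no_path_x_z_y: "(x, z) \<in> A \<Longrightarrow> (z, y) \<in> A \<Longrightarrow> False"
proof -
  assume arcs: "(x, z) \<in> A" "(z, y) \<in> A"
  then have "z \<noteq> x" "z \<noteq> y" using no_arc_in_X X by auto
  then have "dpath A [x, z, y] x y" using arcs xy by (simp add: dpath_def path_arcs_def)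
  then show False using no_short by fastforce
qed

lemma no_path_y_z_x: "(y, z) \<in> A \<Longrightarrow> (z, x) \<in> A \<Longrightarrow> False"
proof -
  assume arcs: "(y, z) \<in> A" "(z, x) \<in> A"
  then have "z \<noteq> x" "z \<noteq> y" using no_arc_in_X X by auto
  then have "dpath A [y, z, x] y x" using arcs xy by (simp add: dpath_def path_arcs_def)
  moreover have "card (path_colors col [y, z, x]) \<le> 2"
    by (simp add: path_colors_def path_arcs_def card_insert_if)
  ultimately show False using no_back by blast
qed

definition common_out :: "'a \<Rightarrow> bool" where
  "common_out z \<longleftrightarrow> (x, z) \<in> A \<and> (y, z) \<in> A"

definition common_in :: "'a \<Rightarrow> bool" where
  "common_in z \<longleftrightarrow> (z, x) \<in> A \<and> (z, y) \<in> A"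

lemma outside_X_classified: "w \<in> V \<Longrightarrow> w \<notin> X \<Longrightarrow> common_out w \<or> common_in w"
  using adjacent_outside_X[of w x] adjacent_outside_X[of w y] X no_path_x_z_y no_path_y_z_x
  unfolding common_out_def common_in_def by blast

lemma common_out_not_in: "common_out z \<Longrightarrow> common_in z \<Longrightarrow> False"
  using no_path_x_z_y unfolding common_out_def common_in_def by blast

lemma common_out_not_X: "common_out z \<Longrightarrow> z \<notin> X"
  using no_arc_in_X X unfolding common_out_def by blast

lemma common_in_not_X: "common_in z \<Longrightarrow> z \<notin> X"
  using no_arc_in_X X unfolding common_in_def by blast

text \<open>An arc from a common out-neighbour to a common in-neighbour closes two directed
  triangles, which yield the monochromatic back path y u w x.\<close>

lemma no_out_in_arc:
  assumes u: "common_out u" and w: "common_in w" and uw: "(u, w) \<in> A"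
  shows False
proof -
  have "u \<noteq> w" using u w common_out_not_in by blast
  moreover have "u \<noteq> x" "u \<noteq> y" "w \<noteq> x" "w \<noteq> y"
    using common_out_not_X[OF u] common_in_not_X[OF w] X by auto
  ultimately have dist: "distinct [y, u, w, x]" using xy by auto
  have arcs: "(x, u) \<in> A" "(y, u) \<in> A" "(w, x) \<in> A" "(w, y) \<in> A"
    using u w unfolding common_out_def common_in_def by auto
  have "mono_cycle col [x, u, w]" by (rule C3, rule dcycle3I) (use dist arcs uw in auto)
  note cx = mono_cycle3_colors[OF this]
  have "mono_cycle col [y, u, w]" by (rule C3, rule dcycle3I) (use dist arcs uw in auto)
  note cy = mono_cycle3_colors[OF this]
  have "dpath A [y, u, w, x] y x" using dist arcs uw by (simp add: dpath_def path_arcs_def)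
  then show False
    by (rule no_monochromatic_back_path[where c = "col (u, w)"])
      (use cx cy in \<open>simp add: path_colors_def path_arcs_def\<close>)
qed

text \<open>A path u v w from a common out-neighbour through X to a common in-neighbour closes
  two directed 4-cycles, which yield the monochromatic back path y u v w x.\<close>

lemma no_out_X_in_path:
  assumes u: "common_out u" and v: "v \<in> X" and w: "common_in w"
    and uv: "(u, v) \<in> A" and vw: "(v, w) \<in> A"
  shows False
proof -
  have arcs: "(x, u) \<in> A" "(y, u) \<in> A" "(w, x) \<in> A" "(w, y) \<in> A"
    using u w unfolding common_out_def common_in_def by auto
  have "v \<noteq> x" using no_path_y_z_x arcs uv by blast
  moreover have "v \<noteq> y" using no_path_x_z_y arcs uv by blast
  moreover have "u \<noteq> w" using u w common_out_not_in by blast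
  moreover have "u \<notin> X" "w \<notin> X" using common_out_not_X[OF u] common_in_not_X[OF w] .
  ultimately have dist: "distinct [y, u, v, w, x]" using xy X v by auto
  have "mono_cycle col [x, u, v, w]" by (rule C4, rule dcycle4I) (use dist arcs uv vw in auto)
  note cx = mono_cycle4_colors[OF this]
  have "mono_cycle col [y, u, v, w]" by (rule C4, rule dcycle4I) (use dist arcs uv vw in auto)
  note cy = mono_cycle4_colors[OF this]
  have "dpath A [y, u, v, w, x] y x" using dist arcs uv vw by (simp add: dpath_def path_arcs_def)
  then show False
    by (rule no_monochromatic_back_path[where c = "col (u, v)"])
      (use cx cy in \<open>simp add: path_colors_def path_arcs_def\<close>)
qed

text \<open>Every x-y path enters the common in-neighbours for the first time either directly from a
  common out-neighbour or through a vertex of X preceded by a common out-neighbour.\<close>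

lemma path_crosses:
  assumes p: "dpath A p x y"
  shows "\<exists>u w. common_out u \<and> common_in w \<and>
           ((u, w) \<in> A \<or> (\<exists>v\<in>X. (u, v) \<in> A \<and> (v, w) \<in> A))"
proof -
  define n where "n = length p"
  have p_first: "p ! 0 = x" and p_last: "p ! (n - 1) = y" and "n \<noteq> 0"
    using p unfolding dpath_def n_def by (auto simp: hd_conv_nth last_conv_nth)
  then have "n \<ge> 2" using xy by (cases "n = 1") auto
  have arc: "\<And>i. Suc i < n \<Longrightarrow> (p ! i, p ! Suc i) \<in> A" using dpath_arc[OF p] n_def by blast
  have "n \<noteq> 2" using arc[of 0] p_first p_last not_adjacent by auto
  with \<open>n \<ge> 2\<close> have "n \<ge> 3" by simp
  have classified: "common_out (p ! i) \<or> common_in (p ! i)" if "Suc i < n" "p ! i \<notin> X" for i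
    using outside_X_classified arcs_in_V arc that by blast
  have out1: "common_out (p ! 1)"
  proof -
    have a: "(x, p ! 1) \<in> A" using arc[of 0] p_first \<open>n \<ge> 3\<close> by simp
    then have "p ! 1 \<notin> X" using no_arc_in_X X by blast
    then show ?thesis using classified[of 1] a \<open>n \<ge> 3\<close> no_path_x_z_y unfolding common_in_def by auto
  qed
  have in_last: "common_in (p ! (n - 2))"
  proof -
    have idx: "Suc (n - 2) = n - 1" "Suc (n - 2) < n" using \<open>n \<ge> 3\<close> by auto
    then have a: "(p ! (n - 2), y) \<in> A" using arc[of "n - 2"] p_last by simp
    then have "p ! (n - 2) \<notin> X" using no_arc_in_X X by blast
    then have "common_out (p ! (n - 2)) \<or> common_in (p ! (n - 2))" using classified idx by blast
    then show ?thesis using a no_path_x_z_y unfolding common_out_def by blast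
  qed
  define j where "j = (LEAST j. common_in (p ! j))"
  have in_j: "common_in (p ! j)" unfolding j_def by (rule LeastI[where P = "\<lambda>j. common_in (p ! j)", OF in_last])
  have "j \<le> n - 2" unfolding j_def by (rule Least_le[where P = "\<lambda>j. common_in (p ! j)", OF in_last])
  have before_j: "\<not> common_in (p ! i)" if "i < j" for i using that unfolding j_def by (rule not_less_Least)
  have "j \<noteq> 0" using in_j p_first common_in_not_X[of x] X(2) by metis
  have "j \<noteq> 1" using in_j out1 common_out_not_in by auto
  have arc_j: "(p ! (j - 1), p ! j) \<in> A" using arc[of "j - 1"] \<open>j \<noteq> 0\<close> \<open>j \<le> n - 2\<close> \<open>n \<ge> 3\<close> by simp
  show ?thesis
  proof (cases "p ! (j - 1) \<in> X")
    case False
    then have "common_out (p ! (j - 1))"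
      using classified[of "j - 1"] before_j[of "j - 1"] \<open>j \<noteq> 0\<close> \<open>j \<le> n - 2\<close> by auto
    then show ?thesis using in_j arc_j by blast
  next
    case True
    have idx: "Suc (j - 2) = j - 1" "Suc (j - 2) < n" using \<open>j \<noteq> 0\<close> \<open>j \<noteq> 1\<close> \<open>j \<le> n - 2\<close> by auto
    then have arc_j2: "(p ! (j - 2), p ! (j - 1)) \<in> A" using arc[of "j - 2"] by simp
    then have "p ! (j - 2) \<notin> X" using no_arc_in_X True by blast
    then have "common_out (p ! (j - 2))"
      using classified[of "j - 2"] before_j[of "j - 2"] idx \<open>j \<noteq> 0\<close> by auto
    then show ?thesis using in_j arc_j arc_j2 True by blast
  qed
qed

lemma no_path: "\<not> dpath A p x y"
  using path_crosses no_out_in_arc no_out_X_in_path by blast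

end

theorem mainTheorem4:
  fixes V :: "'a set" and A :: "('a \<times> 'a) set" and P :: "'a set set"
    and col :: "'a \<times> 'a \<Rightarrow> 'c" and x y :: 'a
  assumes D: "semicomplete_multipartite V A P"
    and r: "card P \<ge> 3"
    and C3: "\<And>c. dcycle A 3 c \<Longrightarrow> mono_cycle col c"
    and C4: "\<And>c. dcycle A 4 c \<Longrightarrow> mono_cycle col c"
    and xV: "x \<in> V" and yV: "y \<in> V" and xy: "x \<noteq> y"
    and two: "\<exists>p. dpath A p x y \<and> card (path_colors col p) = 2"
    and none: "\<not> (\<exists>q. dpath A q y x \<and> card (path_colors col q) \<le> 2)"
  shows "\<exists>p. dpath A p x y \<and> length p \<le> 3"
proof (rule ccontr)
  assume short: "\<not> (\<exists>p. dpath A p x y \<and> length p \<le> 3)"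
  interpret counterexample V A P col x y
    using D C3 C4 xV yV xy short none by unfold_locales
  obtain X where "X \<in> P" "x \<in> X" "y \<in> X" using common_part by blast
  then interpret counterexample_part V A P col x y X by unfold_locales
  obtain p where "dpath A p x y" using two by blast
  with no_path show False by blast
qed

end
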